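(* Let $B^{H,K}$ be a bifractional Brownian motion with $0<H\le1/2$, $0<K\le1$ and $2HK=1/2$. Then for every $T>0$, $W=B^{H,K}$ satisfies conditions (i)–(iv) below on $[0,T]$ (with constants depending on $T$).
   Context: The bifractional Brownian motion $B^{H,K}=\{B^{H,K}_t,t\ge0\}$, $H\in(0,1)$, $K\in(0,1]$, is the centered Gaussian process with $\mathbb E[B^{H,K}_tB^{H,K}_s]=2^{-K}\big[(t^{2H}+s^{2H})^K-|t-s|^{2HK}\big]$. Conditions for a centered Gaussian process $W$ on $[0,T]$: (i) $\mathbb E[(W_t-W_{t-s})^2]\le C_1 s^{1/2}$ for $0<s\le t\le T$. (ii) There are $1<\alpha\le3/2$, $\beta=\frac32-\alpha$ such that for $s>0$, $2s\le r,t\le T$, $|t-r|\ge2s$: $|\mathbb E[(W_t-W_{t-s})(W_r-W_{r-s})]|\le C_1s^2|t-r|^{-\alpha}(t\wedge r-s)^{-\beta}+C_1s^2|t-r|^{-3/2}$. (iii) For $0<t\le T$, $0<s\le r\le T$: $|\mathbb E[W_t(W_{r+s}-2W_r+W_{r-s})]|\le C_2s^{1/2}$ if $r<2s$ or $|t-r|<2s$, and $\le C_2s^2((r-s)^{-3/2}+|t-r|^{-3/2})$ if $r\ge2s$ and $|t-r|\ge2s$. (iv) For $0<s\le t\le T-s$: $|\mathbb E[W_t(W_{t+s}-W_{t-s})]|\le C_3s^{1/2}$ if $t<2s$ and $\le C_3s(t-s)^{-1/2}$ if $t\ge2s$; for $0<s\le r\le T$: $|\mathbb E[W_r(W_{t+s}-W_{t-s})]|\le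 C_3s^{1/2}$ if $t<2s$ or $|t-r|<2s$, and $\le C_3s(t-s)^{-1/2}+C_3s|t-r|^{-1/2}$ if $t\ge2s$ and $|t-r|\ge2s$; and for $t>2s$: $|\mathbb E[W_s(W_t-W_{t-s})]|\le C_3s^{1/2+\gamma}(t-2s)^{-\gamma}$ for some $\gamma>0$. *)

theory Defs
  imports Complex_Main
begin

definition bfbm_cov :: "real \<Rightarrow> real \<Rightarrow> real \<Rightarrow> real \<Rightarrow> real" where
  "bfbm_cov H K t s =
     2 powr (- K) * ((t powr (2*H) + s powr (2*H)) powr K - \<bar>t - s\<bar> powr (2*H*K))"

text \<open>For a centered process W with covariance R, all quantities in conditions (i)-(iv)
  are bilinear in W and hence determined by R:
  E[(W_a - W_b)(W_c - W_d)] = R a c - R a d - R b c + R b d.\<close>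
definition incr_cov :: "(real \<Rightarrow> real \<Rightarrow> real) \<Rightarrow> real \<Rightarrow> real \<Rightarrow> real \<Rightarrow> real \<Rightarrow> real" where
  "incr_cov R a b c d = R a c - R a d - R b c + R b d"

text \<open>E[W_t (W_{r+s} - 2 W_r + W_{r-s})]\<close>
definition second_diff_cov :: "(real \<Rightarrow> real \<Rightarrow> real) \<Rightarrow> real \<Rightarrow> real \<Rightarrow> real \<Rightarrow> real" where
  "second_diff_cov R t r s = R t (r + s) - 2 * R t r + R t (r - s)"

definition cond_i :: "(real \<Rightarrow> real \<Rightarrow> real) \<Rightarrow> real \<Rightarrow> real \<Rightarrow> bool" where
  "cond_i R T C1 \<longleftrightarrow>
     (\<forall>s t. 0 < s \<and> s \<le> t \<and> t \<le> T \<longrightarrow> incr_cov R t (t - s) t (t - s) \<le> C1 * s powr (1/2))"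

definition cond_ii :: "(real \<Rightarrow> real \<Rightarrow> real) \<Rightarrow> real \<Rightarrow> real \<Rightarrow> bool" where
  "cond_ii R T C1 \<longleftrightarrow>
     (\<exists>\<alpha> \<beta>. 1 < \<alpha> \<and> \<alpha> \<le> 3/2 \<and> \<beta> = 3/2 - \<alpha> \<and>
       (\<forall>s t r. 0 < s \<and> 2*s \<le> r \<and> r \<le> T \<and> 2*s \<le> t \<and> t \<le> T \<and> \<bar>t - r\<bar> \<ge> 2*s \<longrightarrow>
          \<bar>incr_cov R t (t - s) r (r - s)\<bar>
            \<le> C1 * s^2 * \<bar>t - r\<bar> powr (-\<alpha>) * (min t r - s) powr (-\<beta>)
               + C1 * s^2 * \<bar>t - r\<bar> powr (-3/2)))"

definition cond_iii :: "(real \<Rightarrow> real \<Rightarrow> real) \<Rightarrow> real \<Rightarrow> real \<Rightarrow> bool" where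
  "cond_iii R T C2 \<longleftrightarrow>
     (\<forall>t r s. 0 < t \<and> t \<le> T \<and> 0 < s \<and> s \<le> r \<and> r \<le> T \<longrightarrow>
        ((r < 2*s \<or> \<bar>t - r\<bar> < 2*s) \<longrightarrow> \<bar>second_diff_cov R t r s\<bar> \<le> C2 * s powr (1/2)) \<and>
        ((r \<ge> 2*s \<and> \<bar>t - r\<bar> \<ge> 2*s) \<longrightarrow>
           \<bar>second_diff_cov R t r s\<bar> \<le> C2 * s^2 * ((r - s) powr (-3/2) + \<bar>t - r\<bar> powr (-3/2))))"

definition cond_iv :: "(real \<Rightarrow> real \<Rightarrow> real) \<Rightarrow> real \<Rightarrow> real \<Rightarrow> bool" where
  "cond_iv R T C3 \<longleftrightarrow>
     (\<forall>s t. 0 < s \<and> s \<le> t \<and> t \<le> T - s \<longrightarrow>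
        (t < 2*s \<longrightarrow> \<bar>R t (t + s) - R t (t - s)\<bar> \<le> C3 * s powr (1/2)) \<and>
        (t \<ge> 2*s \<longrightarrow> \<bar>R t (t + s) - R t (t - s)\<bar> \<le> C3 * s * (t - s) powr (-1/2))) \<and>
     (\<forall>s t r. 0 < s \<and> s \<le> t \<and> t \<le> T - s \<and> s \<le> r \<and> r \<le> T \<longrightarrow>
        ((t < 2*s \<or> \<bar>t - r\<bar> < 2*s) \<longrightarrow> \<bar>R r (t + s) - R r (t - s)\<bar> \<le> C3 * s powr (1/2)) \<and>
        ((t \<ge> 2*s \<and> \<bar>t - r\<bar> \<ge> 2*s) \<longrightarrow>
           \<bar>R r (t + s) - R r (t - s)\<bar> \<le> C3 * s * (t - s) powr (-1/2) + C3 * s * \<bar>t - r\<bar> powr (-1/2))) \<and>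
     (\<exists>\<gamma>>0. \<forall>s t. 0 < s \<and> 2*s < t \<and> t \<le> T \<longrightarrow>
        \<bar>R s t - R s (t - s)\<bar> \<le> C3 * s powr (1/2 + \<gamma>) * (t - 2*s) powr (-\<gamma>))"

end

theory Submission
  imports Defs
begin

(* Write p = 2H, so that pK = 1/2.  The covariance then splits as
     bfbm_cov H K x y = c * (G x y - sqrt |x - y|),   c = 2^(-K),  G x y = (x^p + y^p)^K,
   a smooth "non-stationary" part G and the covariance of a scaled Brownian-type term sqrt|x-y|.
   Every quantity in (i)-(iv) is a first, second or mixed difference of the covariance, so it
   suffices to estimate these differences for G and for sqrt separately:
   * sqrt: 1/2-Hoelder continuity, a Lipschitz bound away from 0, and a bound s^2 d^(-3/2) for
     the symmetric second difference (all elementary, proved first);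
   * G: 1/2-Hoelder continuity in each variable (subadditivity of concave powers, using pK = 1/2),
     and via the mean value theorem bounds on the first, second and mixed differences obtained
     from explicit bounds on the partial derivatives; here pK = 1/2 makes every exponent that
     appears equal to -1/2 or -3/2.
   These are developed in the locale bifractional_exponents; the conditions (i)-(iv) are then
   proved for R = c * (G - sqrt |.|) with explicit constants 3, 4, 3, and the main theorem only
   identifies bfbm_cov H K with R. *)

section \<open>Elementary estimates for square roots and concave powers\<close>

lemma powr_neg_half: "0 < y \<Longrightarrow> y powr (-1/2) = 1 / sqrt y"
  for y :: real
  by (simp add: powr_minus_divide powr_half_sqrt)

lemma powr_neg_three_halves: "0 < y \<Longrightarrow> y powr (-3/2) = 1 / (y * sqrt y)"
  for y :: real
proof -
  assume y: "0 < y"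
  have "y powr (3/2) = y * sqrt y"
    using y powr_add[of y 1 "1/2"] by (simp add: powr_half_sqrt)
  then show ?thesis using powr_minus_divide[of y "3/2"] by simp
qed

lemma sqrt_diff_le_sqrt_abs_diff:
  fixes a b :: real
  assumes "0 \<le> a" "0 \<le> b"
  shows "\<bar>sqrt a - sqrt b\<bar> \<le> sqrt \<bar>a - b\<bar>"
proof -
  have one_side: "sqrt a - sqrt b \<le> sqrt \<bar>a - b\<bar>" if "0 \<le> b" "b \<le> a" for a b :: real
  proof -
    have "sqrt a = sqrt ((a - b) + b)" by simp
    also have "\<dots> \<le> sqrt (a - b) + sqrt b" by (rule sqrt_add_le_add_sqrt) (use that in auto)
    finally show ?thesis using that by simp
  qed
  show ?thesis
    using one_side[of b a] one_side[of a b] assms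
    by (cases "b \<le> a") (auto simp: abs_minus_commute)
qed

lemma sqrt_diff_le_lipschitz:
  fixes a b m :: real
  assumes "0 < m" "m \<le> a" "m \<le> b"
  shows "\<bar>sqrt a - sqrt b\<bar> \<le> \<bar>a - b\<bar> * ((1/2) * m powr (-1/2))"
proof -
  have sa: "sqrt m \<le> sqrt a" "sqrt m \<le> sqrt b" and sm: "0 < sqrt m" using assms by auto
  have pos: "0 < sqrt a + sqrt b" using sa sm by linarith
  have "(sqrt a - sqrt b) * (sqrt a + sqrt b) = a - b"
    using assms by (simp add: algebra_simps)
  then have "sqrt a - sqrt b = (a - b) / (sqrt a + sqrt b)"
    using pos by (simp add: eq_divide_eq)
  then have "\<bar>sqrt a - sqrt b\<bar> = \<bar>a - b\<bar> / (sqrt a + sqrt b)"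
    using pos by (simp add: abs_divide)
  also have "\<dots> \<le> \<bar>a - b\<bar> / (2 * sqrt m)"
  proof (rule divide_left_mono)
    show "2 * sqrt m \<le> sqrt a + sqrt b" using sa by linarith
  qed (use sm pos in auto)
  also have "\<dots> = \<bar>a - b\<bar> * ((1/2) * m powr (-1/2))"
    unfolding powr_neg_half[OF assms(1)] by simp
  finally show ?thesis .
qed

text \<open>Writing a, b, e for the square roots of
  d + s, d, d - s one has (a - 2b + e)(a + b)(b + e)(a + e) = -2s^2, and the product is at least
  b^3 = d^(3/2).\<close>
lemma sqrt_second_difference:
  fixes d s :: real
  assumes "0 < s" "s \<le> d"
  shows "\<bar>sqrt (d + s) - 2 * sqrt d + sqrt (d - s)\<bar> \<le> 2 * s^2 * d powr (-3/2)"
proof -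
  define a b e where "a = sqrt (d + s)" "b = sqrt d" "e = sqrt (d - s)"
  have sq: "a^2 = d + s" "b^2 = d" "e^2 = d - s" using assms by (auto simp: a_b_e_def)
  have nn: "0 \<le> e" "0 < b" "b \<le> a" using assms by (auto simp: a_b_e_def)
  define P where "P = (a + b) * (b + e) * (a + e)"
  have ab: "(a - b) * (a + b) = s" and be: "(b - e) * (b + e) = s" and ae: "(a - e) * (a + e) = 2 * s"
    using sq by (simp_all add: algebra_simps power2_eq_square)
  have key: "(a - 2 * b + e) * P = - 2 * s^2"
  proof -
    have "(a - 2 * b + e) * P
        = ((a - b) * (a + b)) * ((b + e) * (a + e)) - ((b - e) * (b + e)) * ((a + b) * (a + e))"
      unfolding P_def by (simp add: algebra_simps)
    also have "\<dots> = - s * ((a - e) * (a + e))" unfolding ab be by (simp add: algebra_simps)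
    also have "\<dots> = - 2 * s^2" unfolding ae by (simp add: power2_eq_square)
    finally show ?thesis .
  qed
  have "b * b \<le> (a + b) * (b + e)" using nn by (intro mult_mono) auto
  then have bP: "b * b * b \<le> P" unfolding P_def using nn by (intro mult_mono) auto
  have "0 < b * b * b" using nn by simp
  with bP have Ppos: "0 < P" by linarith
  have "a - 2 * b + e = ((a - 2 * b + e) * P) / P" using Ppos by simp
  then have "a - 2 * b + e = - 2 * s^2 / P" unfolding key .
  then have "\<bar>a - 2 * b + e\<bar> = 2 * s^2 / P"
    using Ppos by (simp add: abs_divide)
  also have "\<dots> \<le> 2 * s^2 / (b * b * b)" using bP nn Ppos by (intro divide_left_mono) auto
  also have "\<dots> = 2 * s^2 * d powr (-3/2)"
    using sq(2) nn assms powr_neg_three_halves[of d] by (simp add: a_b_e_def)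
  finally show ?thesis by (simp add: a_b_e_def)
qed

lemma powr_subadditive:
  fixes a b q :: real
  assumes "0 \<le> a" "0 \<le> b" "0 < q" "q \<le> 1"
  shows "(a + b) powr q \<le> a powr q + b powr q"
proof (cases "a + b = 0")
  case True
  then show ?thesis using assms by simp
next
  case False
  define S where "S = a + b"
  have S: "0 < S" using False assms by (simp add: S_def)
  have frac: "x / S \<le> (x / S) powr q" if "0 \<le> x" "x \<le> S" for x
  proof (cases "x = 0")
    case False
    have "(x / S) powr 1 \<le> (x / S) powr q"
      by (rule powr_mono') (use assms S that False in \<open>auto simp: divide_simps\<close>)
    then show ?thesis using False that S by simp
  qed simp
  have "1 = a / S + b / S" using S by (simp add: S_def add_divide_distrib[symmetric])
  also have "\<dots> \<le> (a / S) powr q + (b / S) powr q"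
    using frac[of a] frac[of b] assms by (simp add: S_def add_mono)
  also have "\<dots> = (a powr q + b powr q) / S powr q"
    using assms S by (simp add: powr_divide add_divide_distrib)
  finally show ?thesis using S by (simp add: S_def divide_simps)
qed

section \<open>The non-stationary part G and its derivatives\<close>

text \<open>Exponents p = 2H and K with pK = 1/2, the critical case of the theorem.\<close>
locale bifractional_exponents =
  fixes p K :: real
  assumes p_pos: "0 < p" and p_le1: "p \<le> 1" and K_pos: "0 < K" and K_le1: "K \<le> 1"
    and pK: "p * K = 1/2"
begin

lemma Kp: "K * p = 1/2"
  using pK by (simp add: mult.commute)

definition G :: "real \<Rightarrow> real \<Rightarrow> real" where
  "G x y = (x powr p + y powr p) powr K"

lemma G_sym: "G x y = G y x"
  by (simp add: G_def add.commute)

lemma G_mono: "0 \<le> x \<Longrightarrow> x \<le> x' \<Longrightarrow> G x y \<le> G x' y"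
  unfolding G_def using p_pos K_pos by (intro powr_mono2) (auto intro: powr_mono2)

lemma G_mono2: "0 \<le> y \<Longrightarrow> y \<le> y' \<Longrightarrow> G x y \<le> G x y'"
  using G_mono[of y y' x] by (simp add: G_sym)

text \<open>G is 1/2-Hoelder in each variable, with constant 1: apply subadditivity of the concave
  powers y^p and z^K, and use (y^p)^K = sqrt y.\<close>
lemma G_hoelder:
  assumes "0 \<le> y1" "y1 \<le> y2"
  shows "G x y2 - G x y1 \<le> sqrt (y2 - y1)"
proof -
  have inner: "y2 powr p - y1 powr p \<le> (y2 - y1) powr p"
    using powr_subadditive[of "y2 - y1" y1 p] assms p_pos p_le1 by simp
  have inner_nn: "0 \<le> y2 powr p - y1 powr p" using assms p_pos by (simp add: powr_mono2)
  have "G x y2 = ((x powr p + y1 powr p) + (y2 powr p - y1 powr p)) powr K"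
    by (simp add: G_def)
  also have "\<dots> \<le> G x y1 + (y2 powr p - y1 powr p) powr K"
    unfolding G_def by (rule powr_subadditive) (use inner_nn K_pos K_le1 in auto)
  also have "(y2 powr p - y1 powr p) powr K \<le> ((y2 - y1) powr p) powr K"
    by (rule powr_mono2) (use inner inner_nn K_pos in auto)
  also have "((y2 - y1) powr p) powr K = sqrt (y2 - y1)"
    unfolding powr_powr pK using assms by (simp add: powr_half_sqrt)
  finally show ?thesis by simp
qed

text \<open>Derivative of y \<mapsto> (A + y^p)^K; with A = x^p this is the partial derivative of G.\<close>
definition dG :: "real \<Rightarrow> real \<Rightarrow> real" where
  "dG A y = K * p * ((A + y powr p) powr (K - 1) * y powr (p - 1))"

lemma has_derivative_G:
  assumes "0 \<le> A" "0 < y"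
  shows "((\<lambda>y. (A + y powr p) powr K) has_real_derivative dG A y) (at y)"
proof -
  have d: "((\<lambda>y. A + y powr p) has_real_derivative (p * y powr (p - 1))) (at y)"
    using assms by (auto intro!: derivative_eq_intros)
  have "0 < A + y powr p" using assms by (simp add: add_nonneg_pos)
  from DERIV_fun_powr[OF d this, of K] show ?thesis by (simp add: dG_def mult_ac)
qed

lemma dG_bounds:
  assumes "0 \<le> A" "0 < y"
  shows "0 \<le> dG A y" "dG A y \<le> (1/2) * y powr (-1/2)"
proof -
  have S: "y powr p \<le> A + y powr p" "0 < y powr p" using assms by auto
  have "(A + y powr p) powr (K - 1) \<le> (y powr p) powr (K - 1)"
    by (rule powr_mono2') (use S K_le1 in auto)
  then have "(A + y powr p) powr (K - 1) * y powr (p - 1) \<le> (y powr p) powr (K - 1) * y powr (p - 1)"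
    by (rule mult_right_mono) simp
  also have "\<dots> = y powr (p * (K - 1) + (p - 1))" using assms by (simp add: powr_powr flip: powr_add)
  also have "p * (K - 1) + (p - 1) = -1/2" using pK by (simp add: algebra_simps)
  finally show "dG A y \<le> (1/2) * y powr (-1/2)"
    unfolding dG_def Kp by simp
  show "0 \<le> dG A y" using K_pos p_pos by (simp add: dG_def)
qed

lemma G_lipschitz:
  assumes "0 < y1" "y1 \<le> y2"
  shows "\<bar>G x y2 - G x y1\<bar> \<le> (y2 - y1) * ((1/2) * y1 powr (-1/2))"
proof (cases "y1 = y2")
  case False
  then have lt: "y1 < y2" using assms by simp
  have A: "0 \<le> x powr p" by simp
  obtain z where z: "y1 < z" "z < y2"
    and mvt: "G x y2 - G x y1 = (y2 - y1) * dG (x powr p) z"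
    using MVT2[OF lt, of "\<lambda>y. (x powr p + y powr p) powr K" "dG (x powr p)"]
      has_derivative_G[OF A] assms unfolding G_def by force
  have "dG (x powr p) z \<le> (1/2) * z powr (-1/2)" using dG_bounds[OF A, of z] z assms by simp
  also have "\<dots> \<le> (1/2) * y1 powr (-1/2)" using powr_mono2'[of "-1/2" y1 z] z assms by simp
  finally show ?thesis
    using dG_bounds(1)[OF A, of z] z assms lt unfolding mvt by (simp add: abs_mult mult_left_mono)
qed simp

definition d2G :: "real \<Rightarrow> real \<Rightarrow> real" where
  "d2G A y = K * p * ((K - 1) * (A + y powr p) powr (K - 2) * (p * y powr (p - 1)) * y powr (p - 1)
      + (A + y powr p) powr (K - 1) * ((p - 1) * y powr (p - 2)))"

lemma has_derivative_dG:
  assumes "0 \<le> A" "0 < y"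
  shows "(dG A has_real_derivative d2G A y) (at y)"
proof -
  have d: "((\<lambda>y. A + y powr p) has_real_derivative (p * y powr (p - 1))) (at y)"
    using assms by (auto intro!: derivative_eq_intros)
  have pos: "0 < A + y powr p" using assms by (simp add: add_nonneg_pos)
  have d1: "((\<lambda>y. (A + y powr p) powr (K - 1)) has_real_derivative
      (K - 1) * (A + y powr p) powr (K - 2) * (p * y powr (p - 1))) (at y)"
    using DERIV_fun_powr[OF d pos, of "K - 1"] by (simp add: algebra_simps)
  have d2: "((\<lambda>y. y powr (p - 1)) has_real_derivative (p - 1) * y powr (p - 2)) (at y)"
    using has_real_derivative_powr[OF assms(2), of "p - 1"] by (simp add: algebra_simps)
  show ?thesis
    using DERIV_cmult[OF DERIV_mult[OF d1 d2], of "K * p"]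
    unfolding dG_def[abs_def] d2G_def by (simp add: algebra_simps)
qed

text \<open>The second derivative is -(1/2) times a nonnegative combination of two terms, each
  bounded by y^(-3/2), with weights (1 - K) p + (1 - p) = 1/2.\<close>
lemma d2G_bound:
  assumes "0 \<le> A" "0 < y"
  shows "\<bar>d2G A y\<bar> \<le> (1/4) * y powr (-3/2)"
proof -
  define S where "S = A + y powr p"
  have S: "y powr p \<le> S" "0 < y powr p" using assms by (auto simp: S_def)
  define X1 where "X1 = S powr (K - 2) * y powr (p - 1) * y powr (p - 1)"
  define X2 where "X2 = S powr (K - 1) * y powr (p - 2)"
  have X1: "X1 \<le> y powr (-3/2)"
  proof -
    have "S powr (K - 2) \<le> (y powr p) powr (K - 2)"
      by (rule powr_mono2') (use S K_le1 in auto)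
    then have "X1 \<le> (y powr p) powr (K - 2) * y powr (p - 1) * y powr (p - 1)"
      unfolding X1_def by (intro mult_right_mono) auto
    also have "\<dots> = y powr (p * (K - 2) + (p - 1) + (p - 1))"
      using assms by (simp add: powr_powr flip: powr_add)
    also have "p * (K - 2) + (p - 1) + (p - 1) = -3/2" using pK by (simp add: algebra_simps)
    finally show ?thesis by simp
  qed
  have X2: "X2 \<le> y powr (-3/2)"
  proof -
    have "S powr (K - 1) \<le> (y powr p) powr (K - 1)"
      by (rule powr_mono2') (use S K_le1 in auto)
    then have "X2 \<le> (y powr p) powr (K - 1) * y powr (p - 2)"
      unfolding X2_def by (intro mult_right_mono) auto
    also have "\<dots> = y powr (p * (K - 1) + (p - 2))" using assms by (simp add: powr_powr flip: powr_add)
    also have "p * (K - 1) + (p - 2) = -3/2" using pK by (simp add: algebra_simps)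
    finally show ?thesis by simp
  qed
  have X_nn: "0 \<le> X1" "0 \<le> X2" by (simp_all add: X1_def X2_def)
  have eq: "d2G A y = - (1/2) * ((1 - K) * p * X1 + (1 - p) * X2)"
    unfolding d2G_def Kp X1_def X2_def S_def by (simp add: algebra_simps)
  have "(1 - K) * p * X1 + (1 - p) * X2 \<le> (1 - K) * p * y powr (-3/2) + (1 - p) * y powr (-3/2)"
    using X1 X2 K_le1 p_le1 p_pos by (intro add_mono mult_left_mono) auto
  also have "\<dots> = (1/2) * y powr (-3/2)"
    using Kp by (simp add: algebra_simps)
  finally show ?thesis
    unfolding eq using X_nn K_le1 p_le1 p_pos by (simp add: abs_mult)
qed

text \<open>Second difference of G in one variable, by two applications of the mean value theorem:
  first to u \<mapsto> G x (r + u) + G x (r - u), then to dG.\<close>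
lemma G_second_difference:
  assumes "0 < s" "s < r"
  shows "\<bar>G x (r + s) - 2 * G x r + G x (r - s)\<bar> \<le> (1/2) * s^2 * (r - s) powr (-3/2)"
proof -
  define A where "A = x powr p"
  have A: "0 \<le> A" by (simp add: A_def)
  define \<phi> where "\<phi> u = (A + (r + u) powr p) powr K + (A + (r - u) powr p) powr K" for u
  have der: "DERIV \<phi> u :> dG A (r + u) - dG A (r - u)" if "0 \<le> u" "u \<le> s" for u
  proof -
    have "((\<lambda>u. r + u) has_real_derivative 1) (at u)" "((\<lambda>u. r - u) has_real_derivative -1) (at u)"
      by (auto intro!: derivative_eq_intros)
    from DERIV_add[OF DERIV_chain2[OF has_derivative_G this(1)] DERIV_chain2[OF has_derivative_G this(2)]]
    show ?thesis using that assms A unfolding \<phi>_def[abs_def] by simp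
  qed
  obtain \<xi> where xi: "0 < \<xi>" "\<xi> < s" "\<phi> s - \<phi> 0 = s * (dG A (r + \<xi>) - dG A (r - \<xi>))"
    using MVT2[OF assms(1), of \<phi> "\<lambda>u. dG A (r + u) - dG A (r - u)"] der by force
  have lt: "r - \<xi> < r + \<xi>" using xi by simp
  obtain \<eta> where eta: "r - \<xi> < \<eta>" "\<eta> < r + \<xi>"
    "dG A (r + \<xi>) - dG A (r - \<xi>) = (2 * \<xi>) * d2G A \<eta>"
    using MVT2[OF lt, of "dG A" "d2G A"] has_derivative_dG[OF A] xi assms by force
  have eta_pos: "r - s < \<eta>" "0 < r - s" using eta xi assms by auto
  have "\<bar>d2G A \<eta>\<bar> \<le> (1/4) * \<eta> powr (-3/2)" using d2G_bound[OF A, of \<eta>] eta_pos by simp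
  also have "\<dots> \<le> (1/4) * (r - s) powr (-3/2)"
    using powr_mono2'[of "-3/2" "r - s" \<eta>] eta_pos by simp
  finally have d2: "\<bar>d2G A \<eta>\<bar> \<le> (1/4) * (r - s) powr (-3/2)" .
  have "G x (r + s) - 2 * G x r + G x (r - s) = \<phi> s - \<phi> 0"
    by (simp add: \<phi>_def G_def A_def)
  also have "\<bar>\<dots>\<bar> = s * (2 * \<xi>) * \<bar>d2G A \<eta>\<bar>" using xi eta by (simp add: abs_mult)
  also have "\<dots> \<le> s * (2 * s) * ((1/4) * (r - s) powr (-3/2))"
    using xi d2 assms by (intro mult_mono) auto
  also have "\<dots> = (1/2) * s^2 * (r - s) powr (-3/2)" by (simp add: power2_eq_square)
  finally show ?thesis .
qed

text \<open>Variation of the partial derivative dG (y^p) \<xi> = \<partial>G/\<partial>\<xi> (y, \<xi>) in the other variable y,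
  i.e. a bound on the mixed derivative K(1-K) p^2 y^(p-1) \<xi>^(p-1) (y^p + \<xi>^p)^(K-2).\<close>
lemma dG_cross_difference:
  assumes "0 < y1" "y1 < y2" "0 < \<xi>"
  shows "\<bar>dG (y2 powr p) \<xi> - dG (y1 powr p) \<xi>\<bar>
     \<le> (1 - K) / 2 * (y2 - y1) * (y1 powr (p - 1) * \<xi> powr (-1/2 - p))"
proof -
  define F where "F y = K * p * \<xi> powr (p - 1) * (y powr p + \<xi> powr p) powr (K - 1)" for y
  define F' where
    "F' y = - (K * p * p * (1 - K)) * ((\<xi> powr (p - 1) * (y powr p + \<xi> powr p) powr (K - 2)) * y powr (p - 1))"
    for y
  have F: "dG (y powr p) \<xi> = F y" for y by (simp add: dG_def F_def mult_ac)
  have derF: "DERIV F y :> F' y" if "y1 \<le> y" for y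
  proof -
    have ypos: "0 < y" using that assms by simp
    have d: "((\<lambda>y. y powr p + \<xi> powr p) has_real_derivative (p * y powr (p - 1))) (at y)"
      using ypos by (auto intro!: derivative_eq_intros)
    have pos: "0 < y powr p + \<xi> powr p" using ypos assms by (simp add: add_pos_pos)
    show ?thesis
      using DERIV_cmult[OF DERIV_fun_powr[OF d pos, of "K - 1"], of "K * p * \<xi> powr (p - 1)"]
      unfolding F_def[abs_def] F'_def by (simp add: algebra_simps)
  qed
  obtain \<eta> where eta: "y1 < \<eta>" "\<eta> < y2" "F y2 - F y1 = (y2 - y1) * F' \<eta>"
    using MVT2[OF assms(2), of F F'] derF by force
  define S where "S = \<eta> powr p + \<xi> powr p"
  have "S powr (K - 2) \<le> (\<xi> powr p) powr (K - 2)"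
    by (rule powr_mono2') (use assms K_le1 in \<open>auto simp: S_def\<close>)
  then have "\<xi> powr (p - 1) * S powr (K - 2) \<le> \<xi> powr (p - 1) * (\<xi> powr p) powr (K - 2)"
    by (intro mult_left_mono) auto
  also have "\<dots> = \<xi> powr ((p - 1) + p * (K - 2))" using assms by (simp add: powr_powr flip: powr_add)
  also have "(p - 1) + p * (K - 2) = -1/2 - p" using pK by (simp add: algebra_simps)
  finally have b1: "\<xi> powr (p - 1) * S powr (K - 2) \<le> \<xi> powr (-1/2 - p)" .
  have b2: "\<eta> powr (p - 1) \<le> y1 powr (p - 1)"
    using powr_mono2'[of "p - 1" y1 \<eta>] eta assms p_le1 by simp
  have coef: "K * p * p * (1 - K) \<le> (1 - K) / 2"
    unfolding Kp using p_le1 K_le1 p_pos mult_right_mono[of p 1 "1 - K"] by simp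
  have "\<bar>F' \<eta>\<bar> = K * p * p * (1 - K) * ((\<xi> powr (p - 1) * S powr (K - 2)) * \<eta> powr (p - 1))"
    using K_pos K_le1 p_pos by (simp add: F'_def S_def abs_mult)
  also have "\<dots> \<le> (1 - K) / 2 * (\<xi> powr (-1/2 - p) * y1 powr (p - 1))"
    by (intro mult_mono coef b1 b2) (use K_le1 in auto)
  finally have "\<bar>F' \<eta>\<bar> \<le> (1 - K) / 2 * (\<xi> powr (-1/2 - p) * y1 powr (p - 1))" .
  then have "(y2 - y1) * \<bar>F' \<eta>\<bar> \<le> (y2 - y1) * ((1 - K) / 2 * (\<xi> powr (-1/2 - p) * y1 powr (p - 1)))"
    using assms by (intro mult_left_mono) auto
  then show ?thesis using eta assms unfolding F by (simp add: abs_mult mult_ac)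
qed

text \<open>Mixed (rectangular) difference of G, by the mean value theorem in x applied to
  x \<mapsto> G x y2 - G x y1 and the previous lemma.\<close>
lemma G_mixed_difference:
  assumes "0 < y1" "y1 < y2" "0 < x1" "x1 < x2"
  shows "\<bar>G x2 y2 - G x2 y1 - G x1 y2 + G x1 y1\<bar>
     \<le> (1 - K) / 2 * (x2 - x1) * (y2 - y1) * (y1 powr (p - 1) * x1 powr (-1/2 - p))"
proof -
  define \<phi> where "\<phi> x = (y2 powr p + x powr p) powr K - (y1 powr p + x powr p) powr K" for x
  have der: "DERIV \<phi> x :> dG (y2 powr p) x - dG (y1 powr p) x" if "x1 \<le> x" for x
    unfolding \<phi>_def[abs_def] by (intro DERIV_diff has_derivative_G) (use that assms in auto)
  obtain \<xi> where xi: "x1 < \<xi>" "\<xi> < x2"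
    and mvt: "\<phi> x2 - \<phi> x1 = (x2 - x1) * (dG (y2 powr p) \<xi> - dG (y1 powr p) \<xi>)"
    using MVT2[OF assms(4), of \<phi>] der by force
  have cross: "\<bar>dG (y2 powr p) \<xi> - dG (y1 powr p) \<xi>\<bar>
      \<le> (1 - K) / 2 * (y2 - y1) * (y1 powr (p - 1) * \<xi> powr (-1/2 - p))"
    using dG_cross_difference[of y1 y2 \<xi>] assms xi by simp
  have "\<xi> powr (-1/2 - p) \<le> x1 powr (-1/2 - p)"
    using powr_mono2'[of "-1/2 - p" x1 \<xi>] xi assms p_pos by simp
  then have "(1 - K) / 2 * (y2 - y1) * (y1 powr (p - 1) * \<xi> powr (-1/2 - p))
      \<le> (1 - K) / 2 * (y2 - y1) * (y1 powr (p - 1) * x1 powr (-1/2 - p))"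
    using assms K_le1 by (intro mult_left_mono) auto
  with cross have "(x2 - x1) * \<bar>dG (y2 powr p) \<xi> - dG (y1 powr p) \<xi>\<bar>
      \<le> (x2 - x1) * ((1 - K) / 2 * (y2 - y1) * (y1 powr (p - 1) * x1 powr (-1/2 - p)))"
    using assms by (intro mult_left_mono) auto
  moreover have "G x2 y2 - G x2 y1 - G x1 y2 + G x1 y1 = \<phi> x2 - \<phi> x1"
    by (simp add: \<phi>_def G_def add.commute)
  ultimately show ?thesis using assms unfolding mvt by (simp add: abs_mult mult_ac)
qed

section \<open>Difference estimates for the covariance\<close>

definition c :: real where "c = 2 powr (- K)"

definition R :: "real \<Rightarrow> real \<Rightarrow> real" where
  "R x y = c * (G x y - sqrt \<bar>x - y\<bar>)"

lemma c_pos: "0 < c"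
  by (simp add: c_def)

lemma c_le1: "c \<le> 1"
  using powr_mono[of "- K" 0 2] K_pos by (simp add: c_def)

lemma c_diff_bound: "\<bar>c * (X - Y)\<bar> \<le> \<bar>X\<bar> + \<bar>Y\<bar>"
proof -
  have "\<bar>c * (X - Y)\<bar> \<le> \<bar>X - Y\<bar>"
    using c_pos c_le1 mult_left_le_one_le[of "\<bar>X - Y\<bar>" c] by (simp add: abs_mult)
  then show ?thesis using abs_triangle_ineq4[of X Y] by linarith
qed

lemma R_sym: "R x y = R y x"
  by (simp add: R_def G_sym abs_minus_commute)

lemma R_hoelder:
  assumes "0 \<le> y1" "y1 \<le> y2"
  shows "\<bar>R x y2 - R x y1\<bar> \<le> 2 * sqrt (y2 - y1)"
proof -
  have "\<bar>G x y2 - G x y1\<bar> \<le> sqrt (y2 - y1)"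
    using G_hoelder[OF assms] G_mono2[of y1 y2 x] assms by simp
  moreover have "\<bar>sqrt \<bar>x - y2\<bar> - sqrt \<bar>x - y1\<bar>\<bar> \<le> sqrt \<bar>\<bar>x - y2\<bar> - \<bar>x - y1\<bar>\<bar>"
    by (rule sqrt_diff_le_sqrt_abs_diff) auto
  moreover have "sqrt \<bar>\<bar>x - y2\<bar> - \<bar>x - y1\<bar>\<bar> \<le> sqrt (y2 - y1)" using assms by simp
  moreover have "R x y2 - R x y1 = c * ((G x y2 - G x y1) - (sqrt \<bar>x - y2\<bar> - sqrt \<bar>x - y1\<bar>))"
    by (simp add: R_def algebra_simps)
  ultimately show ?thesis
    using c_diff_bound[of "G x y2 - G x y1" "sqrt \<bar>x - y2\<bar> - sqrt \<bar>x - y1\<bar>"] by linarith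
qed

lemma increment_variance:
  assumes "0 < s" "s \<le> t"
  shows "incr_cov R t (t - s) t (t - s) \<le> 3 * sqrt s"
proof -
  define u where "u = t - s"
  have u: "0 \<le> u" "u \<le> t" "\<bar>t - u\<bar> = s" "\<bar>u - t\<bar> = s" using assms by (auto simp: u_def)
  have e: "incr_cov R t u t u = c * ((G t t - G t u) + (G u u - G t u)) + 2 * c * sqrt s"
    unfolding incr_cov_def R_def G_sym[of u t] u(3,4) by (simp add: algebra_simps)
  have "G t t - G t u \<le> sqrt s" using G_hoelder[of u t t] u by simp
  moreover have "G u u - G t u \<le> 0" using G_mono[of u t u] u by simp
  ultimately have "c * ((G t t - G t u) + (G u u - G t u)) \<le> c * sqrt s"
    using c_pos by (intro mult_left_mono) auto
  then have "incr_cov R t u t u \<le> 3 * c * sqrt s" unfolding e by (simp add: algebra_simps)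
  also have "\<dots> \<le> 3 * sqrt s" using c_le1 assms by (intro mult_right_mono) auto
  finally show ?thesis by (simp add: u_def)
qed

text \<open>Covariance of increments over disjoint, separated intervals, condition (ii): the G-part is
  a mixed difference, the sqrt-part a second difference at distance d = t - r.\<close>
lemma increment_covariance_ordered:
  assumes "0 < s" "2 * s \<le> r" "r + 2 * s \<le> t"
  shows "\<bar>incr_cov R t (t - s) r (r - s)\<bar>
     \<le> (1 - K) / 2 * s^2 * ((r - s) powr (p - 1) * (t - r) powr (-1/2 - p)) + 2 * s^2 * (t - r) powr (-3/2)"
proof -
  define d where "d = t - r"
  have d: "2 * s \<le> d" using assms by (simp add: d_def)
  define Dg where "Dg = G t r - G t (r - s) - G (t - s) r + G (t - s) (r - s)"
  define Dh where "Dh = sqrt (d - s) - 2 * sqrt d + sqrt (d + s)"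
  have "\<bar>t - r\<bar> = d" "\<bar>t - (r - s)\<bar> = d + s" "\<bar>t - s - r\<bar> = d - s" "\<bar>t - s - (r - s)\<bar> = d"
    using assms by (auto simp: d_def)
  then have e: "incr_cov R t (t - s) r (r - s) = c * (Dg - (- Dh))"
    by (simp add: incr_cov_def R_def Dg_def Dh_def algebra_simps)
  have "\<bar>Dg\<bar> \<le> (1 - K) / 2 * s * s * ((r - s) powr (p - 1) * (t - s) powr (-1/2 - p))"
    using G_mixed_difference[of "r - s" r "t - s" t] assms unfolding Dg_def by simp
  also have "\<dots> \<le> (1 - K) / 2 * s * s * ((r - s) powr (p - 1) * d powr (-1/2 - p))"
    using powr_mono2'[of "-1/2 - p" d "t - s"] assms p_pos K_le1
    by (intro mult_left_mono) (auto simp: d_def)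
  finally have Dg_bound: "\<bar>Dg\<bar> \<le> (1 - K) / 2 * s^2 * ((r - s) powr (p - 1) * d powr (-1/2 - p))"
    by (simp add: power2_eq_square)
  have "\<bar>Dh\<bar> \<le> 2 * s^2 * d powr (-3/2)"
    using sqrt_second_difference[of s d] assms d unfolding Dh_def by simp
  then show ?thesis
    using e c_diff_bound[of Dg "- Dh"] Dg_bound by (simp add: d_def)
qed

lemma increment_covariance:
  assumes "0 < s" "2 * s \<le> r" "2 * s \<le> t" "2 * s \<le> \<bar>t - r\<bar>"
  shows "\<bar>incr_cov R t (t - s) r (r - s)\<bar>
     \<le> (1 - K) / 2 * s^2 * ((min t r - s) powr (p - 1) * \<bar>t - r\<bar> powr (-1/2 - p))
        + 2 * s^2 * \<bar>t - r\<bar> powr (-3/2)"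
proof (cases "r \<le> t")
  case True
  then show ?thesis using increment_covariance_ordered[of s r t] assms by (simp add: min_def)
next
  case False
  have "incr_cov R t (t - s) r (r - s) = incr_cov R r (r - s) t (t - s)"
    by (simp add: incr_cov_def R_sym[of t] R_sym[of "t - s"])
  then show ?thesis using increment_covariance_ordered[of s t r] assms False by (simp add: min_def)
qed

text \<open>Second difference of R in the second variable, condition (iii).  Near the diagonal or the
  origin it is controlled by the Hoelder bound alone.\<close>
lemma second_difference_near:
  assumes "0 < s" "s \<le> r"
  shows "\<bar>second_diff_cov R t r s\<bar> \<le> 4 * sqrt s"
proof -
  have "\<bar>R t (r + s) - R t r\<bar> \<le> 2 * sqrt s" "\<bar>R t r - R t (r - s)\<bar> \<le> 2 * sqrt s"
    using R_hoelder[of r "r + s" t] R_hoelder[of "r - s" r t] assms by simp_all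
  then show ?thesis unfolding second_diff_cov_def by linarith
qed

lemma second_difference_far:
  assumes "0 < s" "2 * s \<le> r" "2 * s \<le> \<bar>t - r\<bar>"
  shows "\<bar>second_diff_cov R t r s\<bar> \<le> 4 * s^2 * ((r - s) powr (-3/2) + \<bar>t - r\<bar> powr (-3/2))"
proof -
  define d where "d = \<bar>t - r\<bar>"
  define Gs where "Gs = G t (r + s) - 2 * G t r + G t (r - s)"
  define Hs where "Hs = sqrt (d + s) - 2 * sqrt d + sqrt (d - s)"
  have sqrt_terms: "sqrt \<bar>t - (r + s)\<bar> + sqrt \<bar>t - (r - s)\<bar> = sqrt (d + s) + sqrt (d - s)"
    using assms by (cases "r \<le> t") (auto simp: d_def algebra_simps)
  have "second_diff_cov R t r s
      = c * (Gs - ((sqrt \<bar>t - (r + s)\<bar> + sqrt \<bar>t - (r - s)\<bar>) - 2 * sqrt d))"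
    by (simp add: second_diff_cov_def R_def Gs_def d_def algebra_simps)
  then have e: "second_diff_cov R t r s = c * (Gs - Hs)"
    unfolding sqrt_terms Hs_def by (simp add: algebra_simps)
  have "\<bar>Gs\<bar> \<le> (1/2) * s^2 * (r - s) powr (-3/2)"
    unfolding Gs_def by (rule G_second_difference) (use assms in auto)
  moreover have "\<bar>Hs\<bar> \<le> 2 * s^2 * d powr (-3/2)"
    unfolding Hs_def by (rule sqrt_second_difference) (use assms in \<open>auto simp: d_def\<close>)
  moreover have "(1/2) * s^2 * (r - s) powr (-3/2) \<le> 4 * s^2 * (r - s) powr (-3/2)"
    "2 * s^2 * d powr (-3/2) \<le> 4 * s^2 * d powr (-3/2)"
    by (intro mult_right_mono; simp)+
  ultimately show ?thesis
    using e c_diff_bound[of Gs Hs] by (simp add: d_def distrib_left)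
qed

text \<open>Symmetric increments R r (t + s) - R r (t - s), condition (iv): near the diagonal by the
  Hoelder bound, on the diagonal (where the sqrt-part cancels) and far from it by the
  Lipschitz bounds for G and sqrt.\<close>
lemma symmetric_increment_near:
  assumes "0 < s" "s \<le> t"
  shows "\<bar>R r (t + s) - R r (t - s)\<bar> \<le> 3 * sqrt s"
proof -
  have "sqrt 2 \<le> sqrt (9/4)" by simp
  also have "sqrt (9/4) = 3/2" by (simp add: real_sqrt_divide)
  finally have "2 * sqrt 2 * sqrt s \<le> 3 * sqrt s" using assms by (intro mult_right_mono) auto
  moreover have "\<bar>R r (t + s) - R r (t - s)\<bar> \<le> 2 * sqrt ((t + s) - (t - s))"
    by (rule R_hoelder) (use assms in auto)
  ultimately show ?thesis by (simp add: real_sqrt_mult)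
qed

lemma symmetric_increment_diagonal:
  assumes "0 < s" "2 * s \<le> t"
  shows "\<bar>R t (t + s) - R t (t - s)\<bar> \<le> 3 * s * (t - s) powr (-1/2)"
proof -
  have "\<bar>t - (t + s)\<bar> = s" "\<bar>t - (t - s)\<bar> = s" using assms by auto
  then have e: "R t (t + s) - R t (t - s) = c * ((G t (t + s) - G t (t - s)) - 0)"
    by (simp add: R_def algebra_simps)
  have "\<bar>G t (t + s) - G t (t - s)\<bar> \<le> s * (t - s) powr (-1/2)"
    using G_lipschitz[of "t - s" "t + s" t] assms by simp
  then show ?thesis
    using e c_diff_bound[of "G t (t + s) - G t (t - s)" 0] assms by simp
qed

lemma symmetric_increment_far:
  assumes "0 < s" "2 * s \<le> t" "2 * s \<le> \<bar>t - r\<bar>"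
  shows "\<bar>R r (t + s) - R r (t - s)\<bar> \<le> 3 * s * (t - s) powr (-1/2) + 3 * s * \<bar>t - r\<bar> powr (-1/2)"
proof -
  define d where "d = \<bar>t - r\<bar>"
  have dpos: "0 < d" using assms by (simp add: d_def)
  define A where "A = \<bar>r - (t + s)\<bar>"
  define B where "B = \<bar>r - (t - s)\<bar>"
  have e: "R r (t + s) - R r (t - s) = c * ((G r (t + s) - G r (t - s)) - (sqrt A - sqrt B))"
    by (simp add: R_def A_def B_def algebra_simps)
  have G: "\<bar>G r (t + s) - G r (t - s)\<bar> \<le> s * (t - s) powr (-1/2)"
    using G_lipschitz[of "t - s" "t + s" r] assms by simp
  have AB: "d / 4 \<le> A" "d / 4 \<le> B" "\<bar>A - B\<bar> \<le> 2 * s"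
    unfolding d_def A_def B_def using assms by (cases "r \<le> t"; simp add: abs_if)+
  have "(d / 4) powr (-1/2) = 2 * d powr (-1/2)"
    using dpos powr_neg_half[of "d / 4"] powr_neg_half[OF dpos] by (simp add: real_sqrt_divide)
  then have "\<bar>sqrt A - sqrt B\<bar> \<le> \<bar>A - B\<bar> * d powr (-1/2)"
    using sqrt_diff_le_lipschitz[of "d / 4" A B] dpos AB by simp
  also have "\<dots> \<le> 2 * s * d powr (-1/2)" using AB by (intro mult_right_mono) auto
  finally have H: "\<bar>sqrt A - sqrt B\<bar> \<le> 2 * s * d powr (-1/2)" .
  have "0 \<le> s * (t - s) powr (-1/2)" "0 \<le> s * d powr (-1/2)" using assms by simp_all
  then show ?thesis
    using e c_diff_bound[of "G r (t + s) - G r (t - s)" "sqrt A - sqrt B"] G H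
    by (simp add: d_def)
qed

text \<open>The last part of condition (iv), with \<gamma> = 1/2: both G and sqrt are Lipschitz on
  [t - 2s, \<infinity>).\<close>
lemma increment_against_origin_interval:
  assumes "0 < s" "2 * s < t"
  shows "\<bar>R s t - R s (t - s)\<bar> \<le> s * (t - 2 * s) powr (-1/2)"
proof -
  have "\<bar>s - t\<bar> = t - s" "\<bar>s - (t - s)\<bar> = t - 2 * s" using assms by auto
  then have e: "R s t - R s (t - s) = c * ((G s t - G s (t - s)) - (sqrt (t - s) - sqrt (t - 2 * s)))"
    by (simp add: R_def algebra_simps)
  have "\<bar>G s t - G s (t - s)\<bar> \<le> s * ((1/2) * (t - s) powr (-1/2))"
    using G_lipschitz[of "t - s" t s] assms by simp
  also have "\<dots> \<le> s * ((1/2) * (t - 2 * s) powr (-1/2))"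
    using powr_mono2'[of "-1/2" "t - 2 * s" "t - s"] assms by simp
  finally have G: "\<bar>G s t - G s (t - s)\<bar> \<le> s * ((1/2) * (t - 2 * s) powr (-1/2))" .
  have H: "\<bar>sqrt (t - s) - sqrt (t - 2 * s)\<bar> \<le> s * ((1/2) * (t - 2 * s) powr (-1/2))"
    using sqrt_diff_le_lipschitz[of "t - 2 * s" "t - s" "t - 2 * s"] assms by simp
  show ?thesis
    using e c_diff_bound[of "G s t - G s (t - s)" "sqrt (t - s) - sqrt (t - 2 * s)"] G H by simp
qed

lemma R_eq_bfbm_cov: "R = bfbm_cov (p / 2) K"
proof (intro ext)
  fix x y :: real
  have exponent: "2 * (p / 2) * K = 1/2" using pK by simp
  have "\<bar>x - y\<bar> powr (2 * (p / 2) * K) = sqrt \<bar>x - y\<bar>"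
    unfolding exponent by (simp add: powr_half_sqrt)
  then show "R x y = bfbm_cov (p / 2) K x y"
    unfolding bfbm_cov_def R_def c_def G_def by simp
qed

section \<open>Conditions (i)-(iv) for R\<close>

text \<open>The estimates above hold for all times, so the conditions hold on every interval [0, T]
  with constants independent of T.\<close>

lemma cond_i_R: "cond_i R T 3"
  unfolding cond_i_def using increment_variance by (simp add: powr_half_sqrt)

text \<open>For K < 1 (equivalently p > 1/2) take \<alpha> = 1/2 + p, \<beta> = 1 - p; for K = 1 the mixed term
  vanishes and \<alpha> = 3/2, \<beta> = 0 suffice.\<close>
lemma cond_ii_R: "cond_ii R T 3"
proof (cases "K = 1")
  case True
  show ?thesis unfolding cond_ii_def
  proof (rule exI[of _ "3/2"], rule exI[of _ 0], intro conjI allI impI)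
    fix s t r assume a: "0 < s \<and> 2 * s \<le> r \<and> r \<le> T \<and> 2 * s \<le> t \<and> t \<le> T \<and> 2 * s \<le> \<bar>t - r\<bar>"
    then have "min t r - s \<noteq> 0" by auto
    moreover have "\<bar>incr_cov R t (t - s) r (r - s)\<bar> \<le> 2 * s^2 * \<bar>t - r\<bar> powr (-3/2)"
      using increment_covariance[of s r t] a True by simp
    moreover have "0 \<le> s^2 * \<bar>t - r\<bar> powr (-3/2)" by simp
    ultimately show "\<bar>incr_cov R t (t - s) r (r - s)\<bar>
        \<le> 3 * s^2 * \<bar>t - r\<bar> powr - (3/2) * (min t r - s) powr (- 0) + 3 * s^2 * \<bar>t - r\<bar> powr (-3/2)"
      by simp
  qed simp_all
next
  case False
  have "1/2 < p"
  proof (rule ccontr)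
    assume "\<not> 1/2 < p"
    then have "p * K \<le> 1/2 * K" using K_pos by (intro mult_right_mono) auto
    then show False using pK K_le1 False by simp
  qed
  show ?thesis unfolding cond_ii_def
  proof (rule exI[of _ "1/2 + p"], rule exI[of _ "1 - p"], intro conjI allI impI)
    fix s t r assume "0 < s \<and> 2 * s \<le> r \<and> r \<le> T \<and> 2 * s \<le> t \<and> t \<le> T \<and> 2 * s \<le> \<bar>t - r\<bar>"
    then have bound: "\<bar>incr_cov R t (t - s) r (r - s)\<bar>
        \<le> (1 - K) / 2 * (s^2 * \<bar>t - r\<bar> powr (-1/2 - p) * (min t r - s) powr (p - 1))
           + 2 * (s^2 * \<bar>t - r\<bar> powr (-3/2))"
      using increment_covariance[of s r t] by (simp add: mult_ac)
    have "(1 - K) / 2 * (s^2 * \<bar>t - r\<bar> powr (-1/2 - p) * (min t r - s) powr (p - 1))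
        \<le> 3 * (s^2 * \<bar>t - r\<bar> powr (-1/2 - p) * (min t r - s) powr (p - 1))"
      "2 * (s^2 * \<bar>t - r\<bar> powr (-3/2)) \<le> 3 * (s^2 * \<bar>t - r\<bar> powr (-3/2))"
      using K_pos by (intro mult_right_mono; simp)+
    with bound have "\<bar>incr_cov R t (t - s) r (r - s)\<bar>
        \<le> 3 * (s^2 * \<bar>t - r\<bar> powr (-1/2 - p) * (min t r - s) powr (p - 1))
           + 3 * (s^2 * \<bar>t - r\<bar> powr (-3/2))"
      by linarith
    then show "\<bar>incr_cov R t (t - s) r (r - s)\<bar>
        \<le> 3 * s^2 * \<bar>t - r\<bar> powr - (1/2 + p) * (min t r - s) powr - (1 - p) + 3 * s^2 * \<bar>t - r\<bar> powr (-3/2)"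
      by (simp add: mult.assoc minus_diff_eq)
  qed (use \<open>1/2 < p\<close> p_le1 in auto)
qed

lemma cond_iii_R: "cond_iii R T 4"
  unfolding cond_iii_def
  using second_difference_near second_difference_far by (auto simp: powr_half_sqrt)

lemma cond_iv_R: "cond_iv R T 3"
  unfolding cond_iv_def
proof (intro conjI allI impI exI[of _ "1/2"])
  fix s t assume "0 < s \<and> 2 * s < t \<and> t \<le> T"
  then show "\<bar>R s t - R s (t - s)\<bar> \<le> 3 * s powr (1/2 + 1/2) * (t - 2 * s) powr - (1/2)"
    using increment_against_origin_interval[of s t] by simp
qed (use symmetric_increment_near symmetric_increment_diagonal symmetric_increment_far
     in \<open>auto simp: powr_half_sqrt\<close>)

end

theorem proposition5p1:
  fixes H K T :: real
  assumes "0 < H" and "H \<le> 1/2" and "0 < K" and "K \<le> 1" and "2 * H * K = 1/2"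
    and "0 < T"
  shows "\<exists>C1 C2 C3. 0 < C1 \<and> 0 < C2 \<and> 0 < C3 \<and>
           cond_i (bfbm_cov H K) T C1 \<and> cond_ii (bfbm_cov H K) T C1 \<and>
           cond_iii (bfbm_cov H K) T C2 \<and> cond_iv (bfbm_cov H K) T C3"
proof -
  interpret bifractional_exponents "2 * H" K
    by unfold_locales (use assms in auto)
  have "cond_i R T 3" "cond_ii R T 3" "cond_iii R T 4" "cond_iv R T 3"
    by (rule cond_i_R cond_ii_R cond_iii_R cond_iv_R)+
  moreover have "bfbm_cov H K = R" by (simp add: R_eq_bfbm_cov)
  ultimately show ?thesis by (intro exI[of _ 3] exI[of _ 4]) simp
qed

end
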